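(* Assume the standing setting described in the context, with $\varepsilon$ fixed, and let $\alpha>1$, $\delta>0$, $c_0,c_1,c_2>0$, $a_1(\alpha)>0$ satisfy (L1) and (L2) below, and let $b_0,b_1>0$ satisfy (L3) below for this $\delta$: (L1) for every solution $x$ of (S) and every $t\ge0$ with $\|x_t\|_h\le\delta$, $\frac{d}{dt}v(t,x_t)\le-c_0\|x(t)\|^{\gamma+\mu-1}-c_1\|x(t-h)\|^{\gamma+\mu-1}-c_2\int_{-h}^0\|x(t+\theta)\|^{\gamma+\mu-1}d\theta$; (L2) for all $t\ge0$ and $\varphi\in S_\alpha$ with $\|\varphi\|_h\le\delta$, $v(t,\varphi)\ge a_1(\alpha)\|\varphi(0)\|^\gamma+\mathrm w_1\int_{-h}^0\|\varphi(\theta)\|^{\gamma+\mu-1}d\theta$; (L3) for all $t\ge0$ and $\varphi$ with $\|\varphi\|_h\le\delta$, $v(t,\varphi)\le b_0\|\varphi(0)\|^\gamma+b_1\int_{-h}^0\|\varphi(\theta)\|^\gamma d\theta$. Let $b_2=(\beta m+\mathrm w_1+h\mathrm w_2)h$, $b_3=\beta p(\hat bh+\omega(\varepsilon)/\varepsilon)$, and let $\Delta>0$ be a positive root of $\alpha_1\Delta^\gamma+b_2\Delta^{\gamma+\mu-1}+b_3\Delta^{\gamma+\sigma-1}=a_1(\alpha)\delta^\gamma$. Put $b=\max\{b_0,b_1\}$, $c=\min\{c_0,c_2\}$, $K_\Delta=\alpha_1+b_2\Delta^{\mu-1}+b_3\Delta^{\sigma-1}$ and $$\rho=\frac{c}{b^{\frac{\gamma+\mu-1}{\gamma}}\big(2\max\{1,h\}\big)^{\frac{\mu-1}{\gamma}}}.$$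 Let $\tilde\rho\in(0,\rho)$ satisfy $$1+\tilde\rho\, h\,\frac{\mu-1}{\gamma}\,K_\Delta^{\frac{\mu-1}{\gamma}}\,\Delta^{\mu-1}\le\alpha^{\mu-1}.$$ Then for every $\varphi\in C_{[-h,0]}$ with $\|\varphi\|_h<\Delta$ and all $t\ge0$, $$\|x(t,\varphi)\|\le\hat c_1\|\varphi\|_h\Big[1+\hat c_2\|\varphi\|_h^{\mu-1}t\Big]^{-\frac1{\mu-1}},$$ where $\hat c_1=\big(K_\Delta/a_1(\alpha)\big)^{1/\gamma}$ and $\hat c_2=\tilde\rho\,\frac{\mu-1}{\gamma}\,K_\Delta^{\frac{\mu-1}{\gamma}}$.
   Context: Standing setting. Fix $n\ge1$ and a delay $h>0$. $\|\cdot\|$ is the Euclidean norm on $\mathbb R^n$ (and the induced operator norm on matrices). $C_{[-h,0]}$ is the space of continuous $\varphi:[-h,0]\to\mathbb R^n$ with norm $\|\varphi\|_h=\max_{\theta\in[-h,0]}\|\varphi(\theta)\|$. Consider system (S): $\dot x(t)=f(x(t),x(t-h))+B(t)Q(x(t),x(t-h))$, $t\ge0$, with initial function $\varphi\in C_{[-h,0]}$; $x(t,\varphi)$ denotes its solution and $x_t\in C_{[-h,0]}$ is the state $x_t(\theta)=x(t+\theta)$, $\theta\in[-h,0]$. Assumptions: (i) $f:\mathbb R^n\times\mathbb R^n\to\mathbb R^n$ is Lipschitz, continuously differentiable in both arguments, and homogeneous of degree $\mu>1$: $f(c\mathrm x_1,c\mathrm x_2)=c^\mu f(\mathrm x_1,\mathrm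 x_2)$ for all $c>0$; constants $m_1,m_2,\eta_{11},\eta_{12}\ge0$ are such that $\|f(\mathrm x_1,\mathrm x_2)\|\le m_1\|\mathrm x_1\|^\mu+m_2\|\mathrm x_2\|^\mu$ and $\|\partial f/\partial \mathrm x_1(\mathrm x_1,\mathrm x_2)\|\le \eta_{11}\|\mathrm x_1\|^{\mu-1}+\eta_{12}\|\mathrm x_2\|^{\mu-1}$. (ii) $B:[0,\infty)\to\mathbb R^{n\times n}$ is continuous with $\|B(t)\|\le\hat b$ for all $t$. (iii) $Q:\mathbb R^n\times\mathbb R^n\to\mathbb R^n$ is continuously differentiable and, for some $\sigma>1$ and constants $p_1,p_2,q_{jk}\ge0$, $\|Q(\mathrm x_1,\mathrm x_2)\|\le p_1\|\mathrm x_1\|^\sigma+p_2\|\mathrm x_2\|^\sigma$ and $\|\partial Q/\partial\mathrm x_j(\mathrm x_1,\mathrm x_2)\|\le q_{j1}\|\mathrm x_1\|^{\sigma-1}+q_{j2}\|\mathrm x_2\|^{\sigma-1}$, $j=1,2$. (iv) The delay-free system $\dot x=f(x,x)$ is asymptotically stable, and $V:\mathbb R^n\to\mathbb R$ is a positive definite, twice continuously differentiable function, homogeneous of degree $\gamma\ge2$, with constants $\mathrm w,\alpha_0,\alpha_1,\beta,\psi>0$ such that $(\partial V/\partial\mathrm x)^T f(\mathrm x,\mathrm x)\le-\mathrm w\|\mathrm x\|^{\gamma+\mu-1}$, $\alpha_0\|\mathrm x\|^\gamma\le V(\mathrm x)\le\alpha_1\|\mathrm x\|^\gamma$, $\|\partial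 V/\partial\mathrm x\|\le\beta\|\mathrm x\|^{\gamma-1}$, $\|\partial^2V/\partial\mathrm x^2\|\le\psi\|\mathrm x\|^{\gamma-2}$. Perturbation classes: case (a): $\int_0^tB(s)\,ds$ is bounded on $t\ge0$ and $\sigma>(\mu+1)/2$; case (b): $\frac1T\int_t^{t+T}B(s)\,ds\to0$ as $T\to+\infty$ uniformly in $t\ge0$, and $\sigma\ge\mu$. Define $L(t,\varepsilon)=\int_0^{t+h}e^{-\varepsilon(t+h-s)}B(s)\,ds$, where $\varepsilon=0$ in case (a) and $\varepsilon>0$ is a parameter in case (b). In case (b), $\omega(\varepsilon):=\sup_{t\ge0}\varepsilon\|L(t,\varepsilon)\|$ is finite and $\omega(\varepsilon)\to0$ as $\varepsilon\to0$. In case (a) let $l_0>0$ with $\|L(t,0)\|\le l_0$ for all $t\ge0$, and throughout read $\omega(\varepsilon)$ as $0$ and $\omega(\varepsilon)/\varepsilon$ as $l_0$. Fix $\mathrm w_1,\mathrm w_2>0$ with $\mathrm w_0:=\mathrm w-\mathrm w_1-h\mathrm w_2>0$. The functional $v:[0,\infty)\times C_{[-h,0]}\to\mathbb R$ is $v(t,\varphi)=V(\varphi(0))+\Big(\frac{\partial V}{\partial\mathrm x}(\varphi(0))\Big)^T\Big(\int_{-h}^0\big(f(\varphi(0),\varphi(\theta))+B(t+\theta+h)Q(\varphi(0),\varphi(\theta))\big)d\theta-L(t,\varepsilon)Q(\varphi(0),\varphi(0))\Big)+\int_{-h}^0(\mathrm w_1+(h+\theta)\mathrm w_2)\|\varphi(\theta)\|^{\gamma+\mu-1}d\theta.$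 For $\alpha>1$, $S_\alpha=\{\varphi\in C_{[-h,0]}:\|\varphi(\theta)\|\le\alpha\|\varphi(0)\|\ \forall\theta\in[-h,0]\}$. Notation: $m=m_1+m_2$, $p=p_1+p_2$. *)

theory Defs
  imports "HOL-Analysis.Analysis"
begin

text \<open>Vectors of R^n are elements of a Euclidean space 'a; matrices are
bounded linear maps (blinfun), whose norm is the induced operator norm.
Initial functions / states are functions real \<Rightarrow> 'a, only their values on [-h,0] matter.\<close>

definition hnorm :: "real \<Rightarrow> (real \<Rightarrow> 'a::real_normed_vector) \<Rightarrow> real" where
  "hnorm h \<phi> = (SUP \<theta>\<in>{-h..0}. norm (\<phi> \<theta>))"

definition state :: "(real \<Rightarrow> 'a) \<Rightarrow> real \<Rightarrow> real \<Rightarrow> 'a" where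
  "state x t = (\<lambda>\<theta>. x (t + \<theta>))"

definition Lfun :: "(real \<Rightarrow> 'a::real_normed_vector \<Rightarrow>\<^sub>L 'a) \<Rightarrow> real \<Rightarrow> real \<Rightarrow> real \<Rightarrow> 'a \<Rightarrow>\<^sub>L 'a" where
  "Lfun B h t \<epsilon> = integral {0..t+h} (\<lambda>s. exp (- \<epsilon> * (t + h - s)) *\<^sub>R B s)"

definition omega :: "(real \<Rightarrow> 'a::real_normed_vector \<Rightarrow>\<^sub>L 'a) \<Rightarrow> real \<Rightarrow> real \<Rightarrow> real" where
  "omega B h \<epsilon> = (SUP t\<in>{0..}. \<epsilon> * norm (Lfun B h t \<epsilon>))"

definition S_alpha :: "real \<Rightarrow> real \<Rightarrow> (real \<Rightarrow> 'a::real_normed_vector) set" where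
  "S_alpha h \<alpha> = {\<phi>. \<forall>\<theta>\<in>{-h..0}. norm (\<phi> \<theta>) \<le> \<alpha> * norm (\<phi> 0)}"

text \<open>The Lyapunov--Krasovskii functional v(t,phi); DV is the gradient of V.\<close>
definition vfun ::
  "('a::euclidean_space \<Rightarrow> real) \<Rightarrow> ('a \<Rightarrow> 'a) \<Rightarrow> ('a \<Rightarrow> 'a \<Rightarrow> 'a) \<Rightarrow> (real \<Rightarrow> 'a \<Rightarrow>\<^sub>L 'a)
   \<Rightarrow> ('a \<Rightarrow> 'a \<Rightarrow> 'a) \<Rightarrow> real \<Rightarrow> real \<Rightarrow> real \<Rightarrow> real \<Rightarrow> real \<Rightarrow> real \<Rightarrow> real
   \<Rightarrow> (real \<Rightarrow> 'a) \<Rightarrow> real" where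
  "vfun V DV f B Q h \<epsilon> w1 w2 \<gamma> \<mu> t \<phi> =
     V (\<phi> 0)
     + DV (\<phi> 0) \<bullet> (integral {-h..0} (\<lambda>\<theta>. f (\<phi> 0) (\<phi> \<theta>) + blinfun_apply (B (t + \<theta> + h)) (Q (\<phi> 0) (\<phi> \<theta>)))
                     - blinfun_apply (Lfun B h t \<epsilon>) (Q (\<phi> 0) (\<phi> 0)))
     + integral {-h..0} (\<lambda>\<theta>. (w1 + (h + \<theta>) * w2) * norm (\<phi> \<theta>) powr (\<gamma> + \<mu> - 1))"

definition is_solution ::
  "('a::real_normed_vector \<Rightarrow> 'a \<Rightarrow> 'a) \<Rightarrow> (real \<Rightarrow> 'a \<Rightarrow>\<^sub>L 'a) \<Rightarrow> ('a \<Rightarrow> 'a \<Rightarrow> 'a) \<Rightarrow> real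
   \<Rightarrow> (real \<Rightarrow> 'a) \<Rightarrow> real \<Rightarrow> (real \<Rightarrow> 'a) \<Rightarrow> bool" where
  "is_solution f B Q h \<phi> T x \<longleftrightarrow>
     continuous_on {-h..<T} x \<and> (\<forall>\<theta>\<in>{-h..0}. x \<theta> = \<phi> \<theta>) \<and>
     (\<forall>t\<in>{0..<T}. (x has_vector_derivative
          (f (x t) (x (t - h)) + blinfun_apply (B t) (Q (x t) (x (t - h))))) (at t within {0..<T}))"

definition ode_solution :: "('a::real_normed_vector \<Rightarrow> 'a) \<Rightarrow> (real \<Rightarrow> 'a) \<Rightarrow> bool" where
  "ode_solution g y \<longleftrightarrow> (\<forall>t\<ge>0. (y has_vector_derivative g (y t)) (at t within {0..}))"

definition asymp_stable :: "('a::real_normed_vector \<Rightarrow> 'a) \<Rightarrow> bool" where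
  "asymp_stable g \<longleftrightarrow>
     (\<forall>e>0. \<exists>d>0. \<forall>y. ode_solution g y \<and> norm (y 0) < d \<longrightarrow> (\<forall>t\<ge>0. norm (y t) < e)) \<and>
     (\<exists>d>0. \<forall>y. ode_solution g y \<and> norm (y 0) < d \<longrightarrow> (y \<longlongrightarrow> 0) at_top)"

end

theory Submission
  imports Defs
begin

text \<open>Let \<open>r\<close> be the norm of the initial function and
  \<open>\<psi> t = c1hat r (1 + c2hat r powr (\<mu>-1) t) powr (-1/(\<mu>-1))\<close>. Then \<open>a1 \<psi>\<^sup>\<gamma>\<close> solves
  \<open>z' = - \<rho>t z powr ((\<gamma>+\<mu>-1)/\<gamma>)\<close> with \<open>z 0 = K r\<^sup>\<gamma>\<close>, an upper bound for \<open>v\<close> at time \<open>0\<close>.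
  While the state stays in the \<open>\<delta>\<close>-ball, (L1), (L3), convexity and Jensen's inequality give
  \<open>dv/dt \<le> - \<rho> v powr ((\<gamma>+\<mu>-1)/\<gamma>)\<close>, so \<open>v \<le> a1 \<psi>\<^sup>\<gamma>\<close> by comparison, as \<open>\<rho>t < \<rho>\<close>.
  Suppose \<open>\<parallel>x\<parallel>\<close> first reaches \<open>\<psi> + \<eta>\<close> at time \<open>s\<close>. Up to \<open>s\<close> the state stays in the \<open>\<delta>\<close>-ball
  because \<open>c1hat \<Delta> = \<delta>\<close>, and the condition on \<open>\<rho>t\<close> makes \<open>\<psi>\<close> shrink by at most the factor
  \<open>\<alpha>\<close> over one delay interval, so the state at \<open>s\<close> lies in \<open>S_alpha\<close>. There (L2) gives
  \<open>a1 \<parallel>x s\<parallel>\<^sup>\<gamma> \<le> v \<le> a1 (\<psi> s)\<^sup>\<gamma>\<close>, contradicting \<open>\<parallel>x s\<parallel> = \<psi> s + \<eta>\<close>.\<close>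

lemma integral_interval_nonneg:
  fixes g :: "real \<Rightarrow> real"
  assumes "\<And>\<theta>. \<theta> \<in> {a..b} \<Longrightarrow> 0 \<le> g \<theta>"
  shows "0 \<le> integral {a..b} g"
  using assms integral_nonneg not_integrable_integral by (metis order.refl)

lemma norm_integral_interval_le:
  fixes g :: "real \<Rightarrow> 'b::real_normed_vector"
  assumes "a \<le> b" and bound: "\<And>\<theta>. \<theta> \<in> {a..b} \<Longrightarrow> norm (g \<theta>) \<le> C"
  shows "norm (integral {a..b} g) \<le> C * (b - a)"
proof -
  have "0 \<le> C"
    using bound[of a] assms(1) by (meson atLeastAtMost_iff norm_ge_zero order.refl order_trans)
  show ?thesis
  proof (cases "g integrable_on {a..b}")
    case True
    then show ?thesis
      using has_integral_bound_real[OF \<open>0 \<le> C\<close> finite.emptyI integrable_integral[OF True]] bound assms(1)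
      by simp
  qed (use \<open>0 \<le> C\<close> assms(1) in \<open>simp add: not_integrable_integral\<close>)
qed

lemma powr_above_tangent:
  fixes y C p :: real
  assumes "0 \<le> y" "0 < C" "1 \<le> p"
  shows "C powr p + p * C powr (p - 1) * (y - C) \<le> y powr p"
proof (cases "y = 0")
  case True
  have "C powr p = C powr (p - 1) * C"
    using powr_add[of C "p - 1" 1] assms by simp
  then have "C powr p + p * C powr (p - 1) * (y - C) = (1 - p) * (C powr (p - 1) * C)"
    using True by (simp add: algebra_simps)
  also have "\<dots> \<le> 0"
    using assms by (simp add: mult_nonpos_nonneg)
  finally show ?thesis using True by simp
next
  case False
  have "p * C powr (p - 1) * (y - C) \<le> y powr p - C powr p"
    by (rule convex_on_imp_above_tangent[OF powr_convex[OF assms(3)]])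
       (use assms False in \<open>auto simp: interior_open intro!: has_field_derivative_at_within has_real_derivative_powr\<close>)
  then show ?thesis by simp
qed

lemma powr_add_le_two_powr:
  fixes x y p :: real
  assumes "0 \<le> x" "0 \<le> y" "1 \<le> p"
  shows "(x + y) powr p \<le> 2 powr (p - 1) * (x powr p + y powr p)"
proof (cases "x + y = 0")
  case True
  then show ?thesis using assms by simp
next
  case False
  define C where "C = (x + y) / 2"
  have C: "0 < C" using False assms by (simp add: C_def)
  have "C powr p + p * C powr (p - 1) * (x - C) + (C powr p + p * C powr (p - 1) * (y - C))
          \<le> x powr p + y powr p"
    using powr_above_tangent[OF assms(1) C assms(3)] powr_above_tangent[OF assms(2) C assms(3)]
    by linarith
  then have "2 * C powr p \<le> x powr p + y powr p"
    by (simp add: C_def algebra_simps)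
  moreover have "(x + y) powr p = 2 powr (p - 1) * (2 * C powr p)"
  proof -
    have "x + y = 2 * C" by (simp add: C_def)
    then have "(x + y) powr p = 2 powr p * C powr p"
      using C by (simp add: powr_mult)
    then show ?thesis using powr_add[of 2 "p - 1" 1] by simp
  qed
  ultimately show ?thesis by simp
qed

text \<open>Jensen's inequality: integrate the tangent line of \<open>y powr p\<close> at the mean value of \<open>G\<close>.\<close>
lemma integral_powr_le:
  fixes G :: "real \<Rightarrow> real"
  assumes "a < b" "1 \<le> p" "continuous_on {a..b} G" "\<And>\<theta>. \<theta> \<in> {a..b} \<Longrightarrow> 0 \<le> G \<theta>"
  shows "(integral {a..b} G) powr p \<le> (b - a) powr (p - 1) * integral {a..b} (\<lambda>\<theta>. G \<theta> powr p)"
proof -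
  define I where "I = integral {a..b} G"
  define J where "J = integral {a..b} (\<lambda>\<theta>. G \<theta> powr p)"
  define l where "l = b - a"
  have l: "0 < l" using assms(1) by (simp add: l_def)
  have J0: "0 \<le> J" unfolding J_def by (rule integral_interval_nonneg) simp
  have I0: "0 \<le> I" unfolding I_def by (rule integral_interval_nonneg) (use assms(4) in auto)
  show ?thesis
  proof (cases "I = 0")
    case True
    then show ?thesis using J0 assms(2) by (simp add: I_def[symmetric] J_def[symmetric])
  next
    case False
    define C where "C = I / l"
    have C: "0 < C" using False I0 l by (simp add: C_def)
    have GI: "(G has_integral I) {a..b}"
      unfolding I_def using integrable_continuous_interval[OF assms(3)] by (simp add: integrable_integral)
    have "continuous_on {a..b} (\<lambda>\<theta>. G \<theta> powr p)"
      by (rule continuous_on_powr') (use assms in auto)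
    then have GJ: "((\<lambda>\<theta>. G \<theta> powr p) has_integral J) {a..b}"
      unfolding J_def by (intro integrable_integral integrable_continuous_interval)
    have "((\<lambda>\<theta>. C powr p + p * C powr (p - 1) * (G \<theta> - C)) has_integral
            (l * C powr p + p * C powr (p - 1) * (I - l * C))) {a..b}"
      using has_integral_add[OF has_integral_const_real[of "C powr p" a b]
              has_integral_mult_right[OF has_integral_diff[OF GI has_integral_const_real[of C a b]]]]
        assms(1) by (simp add: l_def)
    then have "l * C powr p + p * C powr (p - 1) * (I - l * C) \<le> J"
      by (rule has_integral_le[OF _ GJ]) (use powr_above_tangent assms(2,4) C in auto)
    then have "l * C powr p \<le> J" using l by (simp add: C_def)
    moreover have "l * C powr p = I powr p / l powr (p - 1)"
      using I0 l powr_add[of l "p - 1" 1] by (simp add: C_def powr_divide field_simps)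
    ultimately show ?thesis
      using l by (simp add: I_def[symmetric] J_def[symmetric] l_def[symmetric] divide_le_eq mult.commute)
  qed
qed

lemma nonpos_if_deriv_neg_when_pos:
  fixes D D' :: "real \<Rightarrow> real"
  assumes "a \<le> b"
    and deriv: "\<And>s. s \<in> {a..b} \<Longrightarrow> (D has_real_derivative D' s) (at s within {a..b})"
    and "D a \<le> 0"
    and neg: "\<And>s. s \<in> {a..b} \<Longrightarrow> 0 < D s \<Longrightarrow> D' s < 0"
  shows "D b \<le> 0"
proof (rule ccontr)
  assume Db: "\<not> D b \<le> 0"
  have "continuous_on {a..b} D"
    using deriv by (meson DERIV_continuous continuous_on_eq_continuous_within)
  then have closed: "closed {s \<in> {a..b}. D s \<le> 0}"
    by (rule continuous_on_closed_Collect_le[where g = "\<lambda>_. 0"]) auto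
  define s0 where "s0 = Sup {s \<in> {a..b}. D s \<le> 0}"
  have bdd: "bdd_above {s \<in> {a..b}. D s \<le> 0}" by (auto intro: bdd_aboveI[of _ b])
  have s0: "s0 \<in> {a..b}" "D s0 \<le> 0"
    using closed_contains_Sup[OF _ bdd closed] assms(1,3) unfolding s0_def by auto
  have "s0 < b" using s0 Db by (cases "s0 = b") auto
  have pos: "0 < D s" if "s0 < s" "s \<le> b" for s
    using cSup_upper[OF _ bdd, of s] that s0 unfolding s0_def by fastforce
  obtain s where s: "s0 < s" "s < b" "D b - D s0 = D' s * (b - s0)"
  proof -
    have "(D has_derivative (*) (D' s)) (at s within {s0..b})" if "s0 \<le> s" "s \<le> b" for s
      using deriv[of s] that s0(1) by (auto simp: has_field_derivative_def intro: has_derivative_subset)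
    then show ?thesis using mvt_simple[OF \<open>s0 < b\<close>, of D "\<lambda>s. (*) (D' s)"] that by auto
  qed
  then have "D' s < 0" using neg[of s] pos[of s] s0 by auto
  then have "D' s * (b - s0) < 0" using \<open>s0 < b\<close> by (simp add: mult_neg_pos)
  then show False using s s0 Db by linarith
qed

lemma comparison_with_power_decay:
  fixes v v' z :: "real \<Rightarrow> real"
  assumes "0 \<le> T"
    and v: "\<And>s. s \<in> {0..T} \<Longrightarrow> (v has_real_derivative v' s) (at s within {0..T})"
    and z: "\<And>s. s \<in> {0..T} \<Longrightarrow> (z has_real_derivative - \<rho>' * z s powr p) (at s within {0..T})"
    and z_nonneg: "\<And>s. s \<in> {0..T} \<Longrightarrow> 0 \<le> z s"
    and faster: "\<And>s. s \<in> {0..T} \<Longrightarrow> z s < v s \<Longrightarrow> v' s \<le> - \<rho> * v s powr p"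
    and "0 \<le> \<rho>'" "\<rho>' < \<rho>" "0 \<le> p" "v 0 \<le> z 0"
  shows "v T \<le> z T"
proof -
  have "(\<lambda>s. v s - z s) T \<le> 0"
  proof (rule nonpos_if_deriv_neg_when_pos[OF assms(1)])
    show "((\<lambda>s. v s - z s) has_real_derivative v' s + \<rho>' * z s powr p) (at s within {0..T})"
      if "s \<in> {0..T}" for s
      using DERIV_diff[OF v[OF that] z[OF that]] by simp
  next
    fix s assume s: "s \<in> {0..T}" and "0 < v s - z s"
    then have "z s powr p \<le> v s powr p" "0 < v s powr p"
      using z_nonneg[OF s] assms(8) by (auto intro: powr_mono2)
    then have "\<rho>' * z s powr p < \<rho> * v s powr p"
      using assms(6,7) by (smt (verit) mult_left_mono mult_strict_right_mono)
    then show "v' s + \<rho>' * z s powr p < 0" using faster[OF s] \<open>0 < v s - z s\<close> by simp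
  qed (use assms in auto)
  then show ?thesis by simp
qed

text \<open>If \<open>g\<close> could exceed \<open>\<psi>\<close>, it would at some first time reach \<open>\<psi> + \<eta>\<close> for a small margin
  \<open>\<eta>\<close>; the hypothesis rules out every such first touching.\<close>
lemma le_by_first_crossing:
  fixes g \<psi> :: "real \<Rightarrow> real"
  assumes "0 \<le> t" "continuous_on {0..t} g" "continuous_on {0..t} \<psi>" "g 0 \<le> \<psi> 0" "0 < \<eta>\<^sub>0"
    and crossing: "\<And>\<eta> s. 0 < \<eta> \<Longrightarrow> \<eta> \<le> \<eta>\<^sub>0 \<Longrightarrow> 0 < s \<Longrightarrow> s \<le> t \<Longrightarrow>
                     (\<And>u. 0 \<le> u \<Longrightarrow> u < s \<Longrightarrow> g u < \<psi> u + \<eta>) \<Longrightarrow> g s = \<psi> s + \<eta> \<Longrightarrow> g s \<le> \<psi> s"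
  shows "g t \<le> \<psi> t"
proof (rule ccontr)
  assume "\<not> g t \<le> \<psi> t"
  define \<eta> where "\<eta> = min ((g t - \<psi> t) / 2) \<eta>\<^sub>0"
  have \<eta>: "0 < \<eta>" "\<eta> \<le> \<eta>\<^sub>0" "\<psi> t + \<eta> < g t"
    using \<open>\<not> g t \<le> \<psi> t\<close> assms(5) unfolding \<eta>_def by (auto simp: min_def field_simps)
  define E where "E = {s \<in> {0..t}. \<psi> s + \<eta> \<le> g s}"
  have "closed E"
    unfolding E_def by (rule continuous_on_closed_Collect_le) (use assms(2,3) in \<open>auto intro: continuous_intros\<close>)
  moreover have "t \<in> E" "bdd_below E"
    using \<eta> assms(1) by (auto simp: E_def intro: bdd_belowI[of _ 0])
  ultimately have sE: "Inf E \<in> E" using closed_contains_Inf by blast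
  define s where "s = Inf E"
  have s: "0 \<le> s" "s \<le> t" "\<psi> s + \<eta> \<le> g s" using sE by (auto simp: E_def s_def)
  have before: "g u < \<psi> u + \<eta>" if "0 \<le> u" "u < s" for u
    using cInf_lower[OF _ \<open>bdd_below E\<close>, of u] that s by (force simp: E_def s_def)
  have "0 < s"
    using s assms(4) \<eta>(1) by (cases "s = 0") auto
  have "closed {u \<in> {0..s}. g u \<le> \<psi> u + \<eta>}"
    by (rule continuous_on_closed_Collect_le)
       (use s continuous_on_subset[OF assms(2), of "{0..s}"] continuous_on_subset[OF assms(3), of "{0..s}"]
        in \<open>auto intro: continuous_intros\<close>)
  moreover have "{0..<s} \<subseteq> {u \<in> {0..s}. g u \<le> \<psi> u + \<eta>}"
    using before by (auto intro: less_imp_le)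
  ultimately have "closure {0..<s} \<subseteq> {u \<in> {0..s}. g u \<le> \<psi> u + \<eta>}"
    by (rule closure_minimal[rotated])
  moreover have "s \<in> closure {0..<s}" using \<open>0 < s\<close> by simp
  ultimately have "g s \<le> \<psi> s + \<eta>" by blast
  then have "g s = \<psi> s + \<eta>" using s by simp
  then show False
    using crossing[OF \<eta>(1,2) \<open>0 < s\<close> s(2) before] \<eta>(1) by simp
qed

definition decay_bound :: "real \<Rightarrow> real \<Rightarrow> real \<Rightarrow> real \<Rightarrow> real" where
  "decay_bound C a q t = C * (1 + a * t) powr (- q)"

lemma decay_bound_nonneg: "0 \<le> C \<Longrightarrow> 0 \<le> decay_bound C a q t"
  by (simp add: decay_bound_def)

lemma decay_bound_0 [simp]: "decay_bound C a q 0 = C"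
  by (simp add: decay_bound_def)

lemma decay_bound_le:
  assumes "0 \<le> C" "0 \<le> a" "0 \<le> q" "0 \<le> t"
  shows "decay_bound C a q t \<le> C"
proof -
  have "(1 + a * t) powr (- q) \<le> (1 + a * t) powr 0"
    using assms by (intro powr_mono) auto
  moreover have "0 < 1 + a * t" using assms by (simp add: add_pos_nonneg)
  ultimately have "(1 + a * t) powr (- q) \<le> 1"
    by simp
  then show ?thesis
    using assms(1) mult_left_mono[of _ 1 C] by (simp add: decay_bound_def)
qed

lemma continuous_on_decay_bound:
  assumes "0 \<le> a"
  shows "continuous_on {0..} (decay_bound C a q)"
  unfolding decay_bound_def
  by (intro continuous_intros) (use assms in \<open>auto simp: add_nonneg_eq_0_iff\<close>)

lemma decay_bound_window:
  assumes "0 \<le> C" "0 \<le> a" "0 < q" "(1 + a * h) powr q \<le> \<alpha>" "0 \<le> u" "u \<le> s" "s \<le> u + h"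
  shows "decay_bound C a q u \<le> \<alpha> * decay_bound C a q s"
proof -
  have pos: "0 < 1 + a * u" "0 < 1 + a * s" "0 \<le> a * h"
    using assms by (simp_all add: add_pos_nonneg)
  have "(1 + a * u) * (1 + a * h) = 1 + a * u + a * h + a * u * (a * h)"
    by (simp add: algebra_simps)
  moreover have "0 \<le> a * u * (a * h)" "a * s \<le> a * u + a * h"
    using assms mult_left_mono[of s "u + h" a] by (simp_all add: algebra_simps)
  ultimately have "1 + a * s \<le> (1 + a * u) * (1 + a * h)"
    by linarith
  then have "(1 + a * s) powr q \<le> (1 + a * u) powr q * (1 + a * h) powr q"
    using pos assms(3) by (simp add: powr_mult[symmetric] powr_mono2)
  also have "\<dots> \<le> (1 + a * u) powr q * \<alpha>"
    using assms(4) by (simp add: mult_left_mono)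
  finally have "C * (1 + a * s) powr q \<le> C * ((1 + a * u) powr q * \<alpha>)"
    using assms(1) by (rule mult_left_mono)
  then show ?thesis
    using pos by (simp add: decay_bound_def powr_minus_divide field_simps)
qed

lemma decay_bound_powr:
  assumes "0 \<le> C" "0 < 1 + a * t"
  shows "decay_bound C a q t powr p = decay_bound (C powr p) a (q * p) t"
  using assms by (simp add: decay_bound_def powr_mult powr_powr)

lemma decay_bound_has_real_derivative:
  assumes "0 < k" "0 \<le> C" "0 < 1 + \<rho> * k * C powr k * t"
  shows "(decay_bound C (\<rho> * k * C powr k) (1 / k) has_real_derivative
           - \<rho> * decay_bound C (\<rho> * k * C powr k) (1 / k) t powr (1 + k)) (at t)"
proof -
  define a where "a = \<rho> * k * C powr k"
  have pos: "0 < 1 + a * t" using assms(3) by (simp add: a_def)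
  have "(decay_bound C a (1 / k) has_real_derivative
          C * ((- (1 / k)) * (1 + a * t) powr (- (1 / k) - 1) * a)) (at t)"
    unfolding decay_bound_def
    by (rule DERIV_cmult, rule DERIV_chain2[where f = "\<lambda>z. z powr (- (1 / k))" and g = "\<lambda>t. 1 + a * t",
          OF has_real_derivative_powr[OF pos]]) (auto intro!: derivative_eq_intros)
  moreover have "C * ((- (1 / k)) * (1 + a * t) powr (- (1 / k) - 1) * a)
                   = - \<rho> * decay_bound C a (1 / k) t powr (1 + k)"
  proof -
    have "- (1 / k) * (1 + k) = - (1 / k) - 1" using assms(1) by (simp add: field_simps)
    then have "decay_bound C a (1 / k) t powr (1 + k) = C powr (1 + k) * (1 + a * t) powr (- (1 / k) - 1)"
      using decay_bound_powr[OF assms(2) pos, of "1 / k" "1 + k"] by (simp add: decay_bound_def)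
    moreover have "C powr (1 + k) = C * C powr k"
      using assms(2) by (cases "C = 0") (simp_all add: powr_add)
    ultimately show ?thesis using assms(1) by (simp add: a_def)
  qed
  ultimately show ?thesis by (simp add: a_def)
qed

lemma norm_le_hnorm:
  assumes "continuous_on {-h..0} \<phi>" "\<theta> \<in> {-h..0}"
  shows "norm (\<phi> \<theta>) \<le> hnorm h \<phi>"
proof -
  have "compact ((\<lambda>\<theta>. norm (\<phi> \<theta>)) ` {-h..0})"
    by (intro compact_continuous_image continuous_intros assms(1)) simp
  then have "bdd_above ((\<lambda>\<theta>. norm (\<phi> \<theta>)) ` {-h..0})"
    by (simp add: bounded_imp_bdd_above compact_imp_bounded)
  then show ?thesis unfolding hnorm_def by (rule cSUP_upper[OF assms(2)])
qed

lemma hnorm_le: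
  assumes "0 \<le> h" "\<And>\<theta>. \<theta> \<in> {-h..0} \<Longrightarrow> norm (\<phi> \<theta>) \<le> M"
  shows "hnorm h \<phi> \<le> M"
  unfolding hnorm_def by (rule cSUP_least) (use assms in auto)

lemma hnorm_nonneg:
  assumes "0 \<le> h" "continuous_on {-h..0} \<phi>"
  shows "0 \<le> hnorm h \<phi>"
proof -
  have "0 \<in> {-h..0}" using assms(1) by simp
  then show ?thesis using norm_le_hnorm[OF assms(2)] norm_ge_zero order_trans by meson
qed

lemma continuous_on_state:
  assumes "continuous_on {-h..<T} x" "0 \<le> t" "t < T"
  shows "continuous_on {-h..0} (state x t)"
  unfolding state_def
  by (rule continuous_on_compose2[OF assms(1)]) (use assms(2,3) in \<open>auto intro!: continuous_intros\<close>)

lemma norm_Lfun_le_omega: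
  fixes B :: "real \<Rightarrow> 'a::banach \<Rightarrow>\<^sub>L 'a"
  assumes "0 < \<epsilon>" "0 \<le> h" "0 \<le> t"
    and B_cont: "continuous_on {0..} B" and B_bound: "\<And>t. 0 \<le> t \<Longrightarrow> norm (B t) \<le> bhat"
  shows "norm (Lfun B h t \<epsilon>) \<le> omega B h \<epsilon> / \<epsilon>"
proof -
  have bounded: "\<epsilon> * norm (Lfun B h s \<epsilon>) \<le> bhat" if "0 \<le> s" for s
  proof -
    have "0 \<le> bhat" using B_bound[of 0] norm_ge_zero order_trans by blast
    have cont: "continuous_on {0..s+h} (\<lambda>r. exp (- \<epsilon> * (s + h - r)) *\<^sub>R B r)"
      by (intro continuous_intros continuous_on_subset[OF B_cont]) auto
    have exp_int: "((\<lambda>r. bhat * exp (- \<epsilon> * (s + h - r))) has_integral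
                   (bhat / \<epsilon> - bhat * exp (- \<epsilon> * (s + h)) / \<epsilon>)) {0..s+h}"
    proof -
      have "((\<lambda>r. bhat * exp (- \<epsilon> * (s + h - r)) / \<epsilon>) has_vector_derivative
              bhat * exp (- \<epsilon> * (s + h - r))) (at r within {0..s+h})" for r
        using assms(1) by (auto intro!: derivative_eq_intros
            simp: has_real_derivative_iff_has_vector_derivative[symmetric])
      from fundamental_theorem_of_calculus[OF _ this] show ?thesis
        using that assms(2) by simp
    qed
    have "norm (Lfun B h s \<epsilon>) \<le> integral {0..s+h} (\<lambda>r. bhat * exp (- \<epsilon> * (s + h - r)))"
      unfolding Lfun_def
      by (rule integral_norm_bound_integral[OF integrable_continuous_interval[OF cont]
            has_integral_integrable[OF exp_int]]) (use B_bound in \<open>auto intro: mult_right_mono\<close>)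
    also have "\<dots> = bhat / \<epsilon> - bhat * exp (- \<epsilon> * (s + h)) / \<epsilon>"
      using exp_int by (rule integral_unique)
    also have "\<dots> \<le> bhat / \<epsilon>" using \<open>0 \<le> bhat\<close> assms(1) by simp
    finally show ?thesis using assms(1) by (simp add: field_simps)
  qed
  have "\<epsilon> * norm (Lfun B h t \<epsilon>) \<le> omega B h \<epsilon>"
    unfolding omega_def
    by (rule cSUP_upper) (use assms(3) bounded in \<open>auto intro: bdd_aboveI[of _ bhat]\<close>)
  then show ?thesis using assms(1) by (simp add: field_simps)
qed

lemma norm_vfun_correction_le:
  fixes \<psi> :: "real \<Rightarrow> 'a::real_normed_vector"
  assumes "0 < h" "0 \<le> t" and bound: "\<And>\<theta>. \<theta> \<in> {-h..0} \<Longrightarrow> norm (\<psi> \<theta>) \<le> H"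
    and nonneg: "0 \<le> \<mu>" "0 \<le> \<sigma>" "0 \<le> m1" "0 \<le> m2" "0 \<le> p1" "0 \<le> p2"
    and f_bound: "\<And>a b. norm (f a b) \<le> m1 * norm a powr \<mu> + m2 * norm b powr \<mu>"
    and Q_bound: "\<And>a b. norm (Q a b) \<le> p1 * norm a powr \<sigma> + p2 * norm b powr \<sigma>"
    and B_bound: "\<And>s. 0 \<le> s \<Longrightarrow> norm (B s) \<le> bhat"
    and L_bound: "norm (Lfun B h t \<epsilon>) \<le> kap"
  shows "norm (integral {-h..0} (\<lambda>\<theta>. f (\<psi> 0) (\<psi> \<theta>) + B (t + \<theta> + h) (Q (\<psi> 0) (\<psi> \<theta>)))
                - Lfun B h t \<epsilon> (Q (\<psi> 0) (\<psi> 0)))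
         \<le> ((m1 + m2) * H powr \<mu> + bhat * ((p1 + p2) * H powr \<sigma>)) * h + kap * ((p1 + p2) * H powr \<sigma>)"
proof -
  have at0: "0 \<in> {-h..0}" using assms(1) by simp
  have powr_le: "norm (\<psi> \<theta>) powr e \<le> H powr e" if "\<theta> \<in> {-h..0}" "0 \<le> e" for \<theta> e
    using bound[OF that(1)] that(2) by (simp add: powr_mono2)
  have f_le: "norm (f (\<psi> 0) (\<psi> \<theta>)) \<le> (m1 + m2) * H powr \<mu>" if "\<theta> \<in> {-h..0}" for \<theta>
    using f_bound[of "\<psi> 0" "\<psi> \<theta>"] powr_le[OF at0, of \<mu>] powr_le[OF that, of \<mu>] nonneg
      mult_left_mono[of "norm (\<psi> 0) powr \<mu>" "H powr \<mu>" m1]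
      mult_left_mono[of "norm (\<psi> \<theta>) powr \<mu>" "H powr \<mu>" m2]
    by (simp add: algebra_simps)
  have Q_le: "norm (Q (\<psi> 0) (\<psi> \<theta>)) \<le> (p1 + p2) * H powr \<sigma>" if "\<theta> \<in> {-h..0}" for \<theta>
    using Q_bound[of "\<psi> 0" "\<psi> \<theta>"] powr_le[OF at0, of \<sigma>] powr_le[OF that, of \<sigma>] nonneg
      mult_left_mono[of "norm (\<psi> 0) powr \<sigma>" "H powr \<sigma>" p1]
      mult_left_mono[of "norm (\<psi> \<theta>) powr \<sigma>" "H powr \<sigma>" p2]
    by (simp add: algebra_simps)
  have BQ_le: "norm (B (t + \<theta> + h) (Q (\<psi> 0) (\<psi> \<theta>))) \<le> bhat * ((p1 + p2) * H powr \<sigma>)"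
    if "\<theta> \<in> {-h..0}" for \<theta>
    using norm_blinfun[of "B (t + \<theta> + h)" "Q (\<psi> 0) (\<psi> \<theta>)"] Q_le[OF that] B_bound[of "t + \<theta> + h"] that assms(2)
    by (smt (verit) atLeastAtMost_iff mult_mono norm_ge_zero)
  have "norm (integral {-h..0} (\<lambda>\<theta>. f (\<psi> 0) (\<psi> \<theta>) + B (t + \<theta> + h) (Q (\<psi> 0) (\<psi> \<theta>))))
          \<le> ((m1 + m2) * H powr \<mu> + bhat * ((p1 + p2) * H powr \<sigma>)) * (0 - - h)"
    by (rule norm_integral_interval_le) (use assms(1) f_le BQ_le in \<open>auto intro: norm_triangle_le add_mono\<close>)
  moreover have "norm (Lfun B h t \<epsilon> (Q (\<psi> 0) (\<psi> 0))) \<le> kap * ((p1 + p2) * H powr \<sigma>)"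
    using norm_blinfun[of "Lfun B h t \<epsilon>" "Q (\<psi> 0) (\<psi> 0)"] Q_le[OF at0] L_bound
    by (smt (verit) mult_mono norm_ge_zero)
  ultimately show ?thesis using norm_triangle_ineq4 by (smt (verit))
qed

lemma integral_weighted_powr_le:
  fixes \<psi> :: "real \<Rightarrow> 'a::real_normed_vector"
  assumes "0 < h" "\<And>\<theta>. \<theta> \<in> {-h..0} \<Longrightarrow> norm (\<psi> \<theta>) \<le> H" "0 \<le> e" "0 \<le> w1" "0 \<le> w2"
  shows "integral {-h..0} (\<lambda>\<theta>. (w1 + (h + \<theta>) * w2) * norm (\<psi> \<theta>) powr e) \<le> (w1 + h * w2) * H powr e * h"
proof -
  have "(w1 + (h + \<theta>) * w2) * norm (\<psi> \<theta>) powr e \<le> (w1 + h * w2) * H powr e" if "\<theta> \<in> {-h..0}" for \<theta>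
    using that assms(2-5) mult_right_mono[of "h + \<theta>" h w2] by (intro mult_mono powr_mono2) auto
  moreover have "0 \<le> (w1 + (h + \<theta>) * w2) * norm (\<psi> \<theta>) powr e" if "\<theta> \<in> {-h..0}" for \<theta>
    using that assms(4,5) by simp
  ultimately show ?thesis
    using norm_integral_interval_le[of "-h" 0 "\<lambda>\<theta>. (w1 + (h + \<theta>) * w2) * norm (\<psi> \<theta>) powr e"]
      assms(1) by force
qed

lemma vfun_le_powr:
  fixes V :: "'a::euclidean_space \<Rightarrow> real" and \<psi> :: "real \<Rightarrow> 'a"
  assumes "0 < h" "0 \<le> t" "0 \<le> H" and bound: "\<And>\<theta>. \<theta> \<in> {-h..0} \<Longrightarrow> norm (\<psi> \<theta>) \<le> H"
    and exps: "1 \<le> \<gamma>" "1 \<le> \<mu>" "1 \<le> \<sigma>"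
    and nonneg: "0 \<le> \<alpha>1" "0 \<le> \<beta>" "0 \<le> m1" "0 \<le> m2" "0 \<le> p1" "0 \<le> p2" "0 \<le> w1" "0 \<le> w2"
    and V_le: "\<And>z. V z \<le> \<alpha>1 * norm z powr \<gamma>"
    and DV_bound: "\<And>z. norm (DV z) \<le> \<beta> * norm z powr (\<gamma> - 1)"
    and f_bound: "\<And>a b. norm (f a b) \<le> m1 * norm a powr \<mu> + m2 * norm b powr \<mu>"
    and Q_bound: "\<And>a b. norm (Q a b) \<le> p1 * norm a powr \<sigma> + p2 * norm b powr \<sigma>"
    and B_bound: "\<And>s. 0 \<le> s \<Longrightarrow> norm (B s) \<le> bhat"
    and L_bound: "norm (Lfun B h t \<epsilon>) \<le> kap"
  shows "vfun V DV f B Q h \<epsilon> w1 w2 \<gamma> \<mu> t \<psi>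
           \<le> (\<alpha>1 + (\<beta> * (m1 + m2) + w1 + h * w2) * h * H powr (\<mu> - 1)
                + \<beta> * (p1 + p2) * (bhat * h + kap) * H powr (\<sigma> - 1)) * H powr \<gamma>"
proof -
  have exps_nonneg: "0 \<le> \<mu>" "0 \<le> \<sigma>" using exps by simp_all
  have norm0: "norm (\<psi> 0) powr e \<le> H powr e" if "0 \<le> e" for e
    using bound[of 0] assms(1) that by (simp add: powr_mono2)
  define X where "X = integral {-h..0} (\<lambda>\<theta>. f (\<psi> 0) (\<psi> \<theta>) + B (t + \<theta> + h) (Q (\<psi> 0) (\<psi> \<theta>)))
                       - Lfun B h t \<epsilon> (Q (\<psi> 0) (\<psi> 0))"
  have X_le: "norm X \<le> ((m1 + m2) * H powr \<mu> + bhat * ((p1 + p2) * H powr \<sigma>)) * h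
                         + kap * ((p1 + p2) * H powr \<sigma>)"
    unfolding X_def
    by (rule norm_vfun_correction_le[OF assms(1,2) bound exps_nonneg nonneg(3-6) f_bound Q_bound B_bound L_bound])
  have "norm (DV (\<psi> 0)) \<le> \<beta> * H powr (\<gamma> - 1)"
    using DV_bound[of "\<psi> 0"] norm0[of "\<gamma> - 1"] exps(1) nonneg(2) by (smt (verit) mult_left_mono)
  then have DV_X: "DV (\<psi> 0) \<bullet> X \<le> \<beta> * H powr (\<gamma> - 1) * (((m1 + m2) * H powr \<mu>
                     + bhat * ((p1 + p2) * H powr \<sigma>)) * h + kap * ((p1 + p2) * H powr \<sigma>))"
    using norm_cauchy_schwarz[of "DV (\<psi> 0)" X] X_le by (smt (verit) mult_mono norm_ge_zero)
  have V_le': "V (\<psi> 0) \<le> \<alpha>1 * H powr \<gamma>"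
    using V_le[of "\<psi> 0"] norm0[of \<gamma>] exps(1) nonneg(1) by (smt (verit) mult_left_mono)
  have W: "integral {-h..0} (\<lambda>\<theta>. (w1 + (h + \<theta>) * w2) * norm (\<psi> \<theta>) powr (\<gamma> + \<mu> - 1))
             \<le> (w1 + h * w2) * H powr (\<gamma> + \<mu> - 1) * h"
    using integral_weighted_powr_le[OF assms(1) bound _ nonneg(7,8)] exps by simp
  have "vfun V DV f B Q h \<epsilon> w1 w2 \<gamma> \<mu> t \<psi> \<le> \<alpha>1 * H powr \<gamma>
               + \<beta> * H powr (\<gamma> - 1) * (((m1 + m2) * H powr \<mu> + bhat * ((p1 + p2) * H powr \<sigma>)) * h
                                      + kap * ((p1 + p2) * H powr \<sigma>))
               + (w1 + h * w2) * H powr (\<gamma> + \<mu> - 1) * h"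
    unfolding vfun_def using V_le' DV_X W by (simp add: X_def)
  also have "\<dots> = (\<alpha>1 + (\<beta> * (m1 + m2) + w1 + h * w2) * h * H powr (\<mu> - 1)
                   + \<beta> * (p1 + p2) * (bhat * h + kap) * H powr (\<sigma> - 1)) * H powr \<gamma>"
  proof -
    have "H powr (\<gamma> - 1) * H powr \<mu> = H powr (\<mu> - 1) * H powr \<gamma>"
         "H powr (\<gamma> - 1) * H powr \<sigma> = H powr (\<sigma> - 1) * H powr \<gamma>"
         "H powr (\<gamma> + \<mu> - 1) = H powr (\<mu> - 1) * H powr \<gamma>"
      by (simp_all add: powr_add[symmetric] algebra_simps)
    then show ?thesis by (simp add: algebra_simps)
  qed
  finally show ?thesis .
qed

lemma vfun_le_hnorm_powr:
  fixes V :: "'a::euclidean_space \<Rightarrow> real" and \<psi> :: "real \<Rightarrow> 'a"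
  assumes "0 < h" "0 \<le> t" "continuous_on {-h..0} \<psi>" "hnorm h \<psi> \<le> \<Delta>"
    and exps: "1 \<le> \<gamma>" "1 \<le> \<mu>" "1 \<le> \<sigma>"
    and nonneg: "0 \<le> \<alpha>1" "0 \<le> \<beta>" "0 \<le> m1" "0 \<le> m2" "0 \<le> p1" "0 \<le> p2" "0 \<le> w1" "0 \<le> w2"
    and V_le: "\<And>z. V z \<le> \<alpha>1 * norm z powr \<gamma>"
    and DV_bound: "\<And>z. norm (DV z) \<le> \<beta> * norm z powr (\<gamma> - 1)"
    and f_bound: "\<And>a b. norm (f a b) \<le> m1 * norm a powr \<mu> + m2 * norm b powr \<mu>"
    and Q_bound: "\<And>a b. norm (Q a b) \<le> p1 * norm a powr \<sigma> + p2 * norm b powr \<sigma>"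
    and B_bound: "\<And>s. 0 \<le> s \<Longrightarrow> norm (B s) \<le> bhat"
    and L_bound: "norm (Lfun B h t \<epsilon>) \<le> kap"
  shows "vfun V DV f B Q h \<epsilon> w1 w2 \<gamma> \<mu> t \<psi>
           \<le> (\<alpha>1 + (\<beta> * (m1 + m2) + w1 + h * w2) * h * \<Delta> powr (\<mu> - 1)
                + \<beta> * (p1 + p2) * (bhat * h + kap) * \<Delta> powr (\<sigma> - 1)) * hnorm h \<psi> powr \<gamma>"
proof -
  define H where "H = hnorm h \<psi>"
  have H: "0 \<le> H" "H \<le> \<Delta>" using hnorm_nonneg[OF _ assms(3)] assms(1,4) by (auto simp: H_def)
  have "0 \<le> bhat" "0 \<le> kap"
    using B_bound[of 0] L_bound norm_ge_zero order_trans by blast+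
  moreover have "H powr (\<mu> - 1) \<le> \<Delta> powr (\<mu> - 1)" "H powr (\<sigma> - 1) \<le> \<Delta> powr (\<sigma> - 1)"
    using H exps by (auto intro: powr_mono2)
  ultimately have "\<alpha>1 + (\<beta> * (m1 + m2) + w1 + h * w2) * h * H powr (\<mu> - 1)
                     + \<beta> * (p1 + p2) * (bhat * h + kap) * H powr (\<sigma> - 1)
                   \<le> \<alpha>1 + (\<beta> * (m1 + m2) + w1 + h * w2) * h * \<Delta> powr (\<mu> - 1)
                     + \<beta> * (p1 + p2) * (bhat * h + kap) * \<Delta> powr (\<sigma> - 1)"
    using nonneg assms(1) by (intro add_mono mult_left_mono order.refl) auto
  then have "(\<alpha>1 + (\<beta> * (m1 + m2) + w1 + h * w2) * h * H powr (\<mu> - 1)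
                + \<beta> * (p1 + p2) * (bhat * h + kap) * H powr (\<sigma> - 1)) * H powr \<gamma>
              \<le> (\<alpha>1 + (\<beta> * (m1 + m2) + w1 + h * w2) * h * \<Delta> powr (\<mu> - 1)
                + \<beta> * (p1 + p2) * (bhat * h + kap) * \<Delta> powr (\<sigma> - 1)) * H powr \<gamma>"
    by (rule mult_right_mono) simp
  moreover have "vfun V DV f B Q h \<epsilon> w1 w2 \<gamma> \<mu> t \<psi>
      \<le> (\<alpha>1 + (\<beta> * (m1 + m2) + w1 + h * w2) * h * H powr (\<mu> - 1)
          + \<beta> * (p1 + p2) * (bhat * h + kap) * H powr (\<sigma> - 1)) * H powr \<gamma>"
    by (rule vfun_le_powr[OF assms(1,2) H(1)])
       (use norm_le_hnorm[OF assms(3)] exps nonneg V_le DV_bound f_bound Q_bound B_bound L_bound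
        in \<open>auto simp: H_def\<close>)
  ultimately show ?thesis by (simp add: H_def)
qed

text \<open>Convexity of \<open>y powr p\<close> handles the point value and Jensen's inequality the integral;
  the factor \<open>max 1 h\<close> absorbs the length of the delay interval.\<close>
lemma dissipation_dominates_powr:
  fixes \<psi> :: "real \<Rightarrow> 'a::real_normed_vector"
  assumes "0 < h" "0 < \<gamma>" "1 < \<mu>" "0 < b" "0 \<le> c" "continuous_on {-h..0} \<psi>"
  shows "c / (b powr ((\<gamma> + \<mu> - 1) / \<gamma>) * (2 * max 1 h) powr ((\<mu> - 1) / \<gamma>))
           * (b * (norm (\<psi> 0) powr \<gamma> + integral {-h..0} (\<lambda>\<theta>. norm (\<psi> \<theta>) powr \<gamma>))) powr ((\<gamma> + \<mu> - 1) / \<gamma>)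
         \<le> c * (norm (\<psi> 0) powr (\<gamma> + \<mu> - 1) + integral {-h..0} (\<lambda>\<theta>. norm (\<psi> \<theta>) powr (\<gamma> + \<mu> - 1)))"
proof -
  define k where "k = (\<mu> - 1) / \<gamma>"
  define p where "p = (\<gamma> + \<mu> - 1) / \<gamma>"
  define A0 where "A0 = norm (\<psi> 0) powr \<gamma>"
  define A where "A = norm (\<psi> 0) powr (\<gamma> + \<mu> - 1)"
  define I where "I = integral {-h..0} (\<lambda>\<theta>. norm (\<psi> \<theta>) powr \<gamma>)"
  define J where "J = integral {-h..0} (\<lambda>\<theta>. norm (\<psi> \<theta>) powr (\<gamma> + \<mu> - 1))"
  have k: "0 < k" "p = 1 + k" and gp: "\<gamma> * p = \<gamma> + \<mu> - 1"
    using assms(2,3) by (simp_all add: k_def p_def field_simps)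
  have I0: "0 \<le> I" and J0: "0 \<le> J"
    unfolding I_def J_def by (simp_all add: integral_interval_nonneg)
  have A0_p: "A0 powr p = A" unfolding A0_def A_def by (simp add: powr_powr gp)
  have "I powr p \<le> (0 - - h) powr (p - 1) * integral {-h..0} (\<lambda>\<theta>. (norm (\<psi> \<theta>) powr \<gamma>) powr p)"
  proof (unfold I_def, rule integral_powr_le)
    show "continuous_on {-h..0} (\<lambda>\<theta>. norm (\<psi> \<theta>) powr \<gamma>)"
      by (rule continuous_on_powr') (use assms(2,6) in \<open>auto intro: continuous_intros\<close>)
  qed (use assms(1) k in auto)
  also have "integral {-h..0} (\<lambda>\<theta>. (norm (\<psi> \<theta>) powr \<gamma>) powr p) = J"
    unfolding J_def by (simp add: powr_powr gp)
  finally have "I powr p \<le> h powr k * J" using k by simp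
  also have "\<dots> \<le> max 1 h powr k * J"
    using J0 k assms(1) by (intro mult_right_mono powr_mono2) auto
  finally have IJ: "I powr p \<le> max 1 h powr k * J" .
  have one_le: "1 \<le> max 1 h powr k" using k by (simp add: ge_one_powr_ge_zero)
  have "(A0 + I) powr p \<le> 2 powr k * (A0 powr p + I powr p)"
    using powr_add_le_two_powr[of A0 I p] I0 k by (simp add: A0_def)
  also have "\<dots> \<le> 2 powr k * (A + max 1 h powr k * J)"
    using A0_p IJ by (simp add: mult_left_mono)
  also have "\<dots> \<le> 2 powr k * (max 1 h powr k * (A + J))"
    using one_le mult_right_mono[OF one_le, of A] by (simp add: A_def distrib_left)
  finally have main: "(A0 + I) powr p \<le> (2 * max 1 h) powr k * (A + J)"
    by (simp add: powr_mult)
  have "c / (b powr p * (2 * max 1 h) powr k) * (b * (A0 + I)) powr p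
          = c / (2 * max 1 h) powr k * (A0 + I) powr p"
    using assms(4) I0 by (simp add: A0_def powr_mult)
  also have "\<dots> \<le> c * (A + J)"
    using mult_left_mono[OF main, of "c / (2 * max 1 h) powr k"] assms(5) by (simp split: if_splits)
  finally show ?thesis by (simp add: k_def p_def A0_def A_def I_def J_def)
qed

lemma lyapunov_rate_le_neg_powr:
  fixes \<psi> :: "real \<Rightarrow> 'a::real_normed_vector"
  assumes "0 < h" "0 < \<gamma>" "1 < \<mu>" "0 < b0" "0 < b1" "0 \<le> c0" "0 \<le> c2" "0 \<le> e"
    and "continuous_on {-h..0} \<psi>"
    and v: "0 < v" "v \<le> b0 * norm (\<psi> 0) powr \<gamma> + b1 * integral {-h..0} (\<lambda>\<theta>. norm (\<psi> \<theta>) powr \<gamma>)"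
    and D: "D \<le> - c0 * norm (\<psi> 0) powr (\<gamma> + \<mu> - 1) - e
                 - c2 * integral {-h..0} (\<lambda>\<theta>. norm (\<psi> \<theta>) powr (\<gamma> + \<mu> - 1))"
  shows "D \<le> - (min c0 c2 / (max b0 b1 powr ((\<gamma> + \<mu> - 1) / \<gamma>) * (2 * max 1 h) powr ((\<mu> - 1) / \<gamma>)))
                * v powr ((\<gamma> + \<mu> - 1) / \<gamma>)"
proof -
  define A0 where "A0 = norm (\<psi> 0) powr \<gamma>"
  define A where "A = norm (\<psi> 0) powr (\<gamma> + \<mu> - 1)"
  define I where "I = integral {-h..0} (\<lambda>\<theta>. norm (\<psi> \<theta>) powr \<gamma>)"
  define J where "J = integral {-h..0} (\<lambda>\<theta>. norm (\<psi> \<theta>) powr (\<gamma> + \<mu> - 1))"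
  define \<rho> where "\<rho> = min c0 c2 / (max b0 b1 powr ((\<gamma> + \<mu> - 1) / \<gamma>) * (2 * max 1 h) powr ((\<mu> - 1) / \<gamma>))"
  have nonneg: "0 \<le> A0" "0 \<le> A" "0 \<le> I" "0 \<le> J" "0 \<le> \<rho>"
    using assms(4-7) by (simp_all add: A0_def A_def I_def J_def \<rho>_def integral_interval_nonneg)
  have "v \<le> max b0 b1 * (A0 + I)"
    using v(2) nonneg mult_right_mono[of b0 "max b0 b1" A0] mult_right_mono[of b1 "max b0 b1" I]
    by (simp add: A0_def I_def distrib_left)
  then have "\<rho> * v powr ((\<gamma> + \<mu> - 1) / \<gamma>) \<le> \<rho> * (max b0 b1 * (A0 + I)) powr ((\<gamma> + \<mu> - 1) / \<gamma>)"
    using v(1) nonneg assms(2,3) by (intro mult_left_mono powr_mono2) auto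
  also have "\<dots> \<le> min c0 c2 * (A + J)"
    using dissipation_dominates_powr[OF assms(1-3) _ _ assms(9), of "max b0 b1" "min c0 c2"] assms(4,6,7)
    by (simp add: \<rho>_def A0_def A_def I_def J_def)
  also have "\<dots> \<le> c0 * A + e + c2 * J"
    using nonneg assms(8) mult_right_mono[of "min c0 c2" c0 A] mult_right_mono[of "min c0 c2" c2 J]
    by (simp add: distrib_left)
  finally show ?thesis using D by (simp add: \<rho>_def A_def J_def)
qed

lemma lyapunov_rate_along_trajectory:
  fixes v :: "real \<Rightarrow> (real \<Rightarrow> 'a::real_normed_vector) \<Rightarrow> real" and x :: "real \<Rightarrow> 'a"
  assumes "0 < h" "0 < \<gamma>" "1 < \<mu>" "0 < b0" "0 < b1" "0 \<le> c0" "0 \<le> c1" "0 \<le> c2"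
    and cont: "continuous_on {-h..0} (state x s)"
    and deriv: "\<exists>D. ((\<lambda>s. v s (state x s)) has_real_derivative D) (at s within S) \<and>
                  D \<le> - c0 * norm (x s) powr (\<gamma> + \<mu> - 1) - c1 * norm (x (s - h)) powr (\<gamma> + \<mu> - 1)
                       - c2 * integral {-h..0} (\<lambda>\<theta>. norm (x (s + \<theta>)) powr (\<gamma> + \<mu> - 1))"
    and upper: "v s (state x s) \<le> b0 * norm (state x s 0) powr \<gamma>
                                  + b1 * integral {-h..0} (\<lambda>\<theta>. norm (state x s \<theta>) powr \<gamma>)"
  shows "\<exists>D. ((\<lambda>s. v s (state x s)) has_real_derivative D) (at s within S) \<and>
           (0 < v s (state x s) \<longrightarrow>
              D \<le> - (min c0 c2 / (max b0 b1 powr ((\<gamma> + \<mu> - 1) / \<gamma>) * (2 * max 1 h) powr ((\<mu> - 1) / \<gamma>)))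
                     * v s (state x s) powr ((\<gamma> + \<mu> - 1) / \<gamma>))"
proof -
  obtain D where D: "((\<lambda>s. v s (state x s)) has_real_derivative D) (at s within S)"
    "D \<le> - c0 * norm (state x s 0) powr (\<gamma> + \<mu> - 1) - c1 * norm (x (s - h)) powr (\<gamma> + \<mu> - 1)
           - c2 * integral {-h..0} (\<lambda>\<theta>. norm (state x s \<theta>) powr (\<gamma> + \<mu> - 1))"
    using deriv by (auto simp: state_def)
  show ?thesis
    using D lyapunov_rate_le_neg_powr[OF assms(1-6,8) _ cont _ upper D(2)] assms(7) by auto
qed

locale delay_lyapunov_trajectory =
  fixes h \<gamma> \<mu> \<delta> \<Delta> \<alpha> a1 K \<rho> :: real
    and v :: "real \<Rightarrow> (real \<Rightarrow> 'a::euclidean_space) \<Rightarrow> real"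
    and \<phi> x :: "real \<Rightarrow> 'a" and T :: real
  assumes h_pos: "0 < h" and gamma_pos: "0 < \<gamma>" and mu_gt: "1 < \<mu>" and alpha_ge: "1 \<le> \<alpha>"
    and delta_pos: "0 < \<delta>" and Delta_pos: "0 < \<Delta>" and a1_pos: "0 < a1"
    and K_Delta: "K * \<Delta> powr \<gamma> = a1 * \<delta> powr \<gamma>"
    and phi_cont: "continuous_on {-h..0} \<phi>"
    and x_cont: "continuous_on {-h..<T} x"
    and x_init: "\<And>\<theta>. \<theta> \<in> {-h..0} \<Longrightarrow> x \<theta> = \<phi> \<theta>"
    and v_deriv: "\<And>t. t \<in> {0..<T} \<Longrightarrow> hnorm h (state x t) \<le> \<delta> \<Longrightarrow>
                    \<exists>D. ((\<lambda>s. v s (state x s)) has_real_derivative D) (at t within {0..<T}) \<and>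
                        (0 < v t (state x t) \<longrightarrow> D \<le> - \<rho> * v t (state x t) powr ((\<gamma> + \<mu> - 1) / \<gamma>))"
    and v_lower: "\<And>t \<psi>. 0 \<le> t \<Longrightarrow> continuous_on {-h..0} \<psi> \<Longrightarrow> \<psi> \<in> S_alpha h \<alpha> \<Longrightarrow>
                    hnorm h \<psi> \<le> \<delta> \<Longrightarrow> a1 * norm (\<psi> 0) powr \<gamma> \<le> v t \<psi>"
    and v_upper: "\<And>t \<psi>. 0 \<le> t \<Longrightarrow> continuous_on {-h..0} \<psi> \<Longrightarrow>
                    hnorm h \<psi> \<le> \<Delta> \<Longrightarrow> v t \<psi> \<le> K * hnorm h \<psi> powr \<gamma>"
begin

text \<open>Test both bounds on \<open>v\<close> with a constant initial function.\<close>
lemma a1_le_K: "a1 \<le> K"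
proof -
  obtain u :: 'a where u: "u \<in> Basis" using nonempty_Basis by blast
  define r where "r = min \<Delta> \<delta>"
  have r: "0 < r" "r \<le> \<Delta>" "r \<le> \<delta>" using Delta_pos delta_pos by (auto simp: r_def)
  have norm_u: "norm (r *\<^sub>R u) = r" using u r by simp
  have hnorm_const: "hnorm h (\<lambda>_. r *\<^sub>R u) = r"
    unfolding hnorm_def norm_u using h_pos by simp
  have "a1 * r powr \<gamma> \<le> v 0 (\<lambda>_. r *\<^sub>R u)"
    using v_lower[of 0 "\<lambda>_. r *\<^sub>R u"] hnorm_const norm_u r alpha_ge by (simp add: S_alpha_def)
  also have "\<dots> \<le> K * r powr \<gamma>"
    using v_upper[of 0 "\<lambda>_. r *\<^sub>R u"] hnorm_const r by simp
  finally show ?thesis using r by simp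
qed

lemma v_le_comparison:
  fixes z :: "real \<Rightarrow> real"
  assumes "0 \<le> s0" "s0 < T" and small: "\<And>s. 0 \<le> s \<Longrightarrow> s \<le> s0 \<Longrightarrow> hnorm h (state x s) \<le> \<delta>"
    and z_deriv: "\<And>s. 0 \<le> s \<Longrightarrow> (z has_real_derivative - \<rho>' * z s powr ((\<gamma> + \<mu> - 1) / \<gamma>)) (at s)"
    and z_nonneg: "\<And>s. 0 \<le> s \<Longrightarrow> 0 \<le> z s"
    and "0 \<le> \<rho>'" "\<rho>' < \<rho>" "v 0 (state x 0) \<le> z 0"
  shows "v s0 (state x s0) \<le> z s0"
proof -
  have "\<forall>s\<in>{0..s0}. \<exists>D. ((\<lambda>s. v s (state x s)) has_real_derivative D) (at s within {0..s0}) \<and>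
          (z s < v s (state x s) \<longrightarrow> D \<le> - \<rho> * v s (state x s) powr ((\<gamma> + \<mu> - 1) / \<gamma>))"
  proof
    fix s assume s: "s \<in> {0..s0}"
    then obtain D where D: "((\<lambda>s. v s (state x s)) has_real_derivative D) (at s within {0..<T})"
        "0 < v s (state x s) \<longrightarrow> D \<le> - \<rho> * v s (state x s) powr ((\<gamma> + \<mu> - 1) / \<gamma>)"
      using v_deriv[of s] small[of s] assms(2) by auto
    have "{0..s0} \<subseteq> {0..<T}" using assms(2) by auto
    then show "\<exists>D. ((\<lambda>s. v s (state x s)) has_real_derivative D) (at s within {0..s0}) \<and>
          (z s < v s (state x s) \<longrightarrow> D \<le> - \<rho> * v s (state x s) powr ((\<gamma> + \<mu> - 1) / \<gamma>))"
      using D z_nonneg[of s] s by (auto intro: DERIV_subset)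
  qed
  then obtain D where D: "\<And>s. s \<in> {0..s0} \<Longrightarrow> ((\<lambda>s. v s (state x s)) has_real_derivative D s) (at s within {0..s0})"
      "\<And>s. s \<in> {0..s0} \<Longrightarrow> z s < v s (state x s) \<Longrightarrow> D s \<le> - \<rho> * v s (state x s) powr ((\<gamma> + \<mu> - 1) / \<gamma>)"
    by metis
  show ?thesis
    using comparison_with_power_decay[where v = "\<lambda>s. v s (state x s)", OF assms(1) D(1) _ _ D(2)] assms(6-8)
      z_deriv z_nonneg gamma_pos mu_gt by (auto intro: has_field_derivative_at_within)
qed

lemma norm_le_barrier:
  fixes \<psi> z :: "real \<Rightarrow> real"
  assumes "t \<in> {0..<T}"
    and psi_cont: "continuous_on {0..} \<psi>" and psi_nonneg: "\<And>s. 0 \<le> s \<Longrightarrow> 0 \<le> \<psi> s"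
    and psi_le: "\<And>s. 0 \<le> s \<Longrightarrow> \<psi> s \<le> M" and "M < \<delta>"
    and psi_window: "\<And>u s. 0 \<le> u \<Longrightarrow> u \<le> s \<Longrightarrow> s \<le> u + h \<Longrightarrow> \<psi> u \<le> \<alpha> * \<psi> s"
    and init: "\<And>\<theta>. \<theta> \<in> {-h..0} \<Longrightarrow> norm (x \<theta>) \<le> \<psi> 0"
    and z_eq: "\<And>s. 0 \<le> s \<Longrightarrow> z s = a1 * \<psi> s powr \<gamma>"
    and z_deriv: "\<And>s. 0 \<le> s \<Longrightarrow> (z has_real_derivative - \<rho>' * z s powr ((\<gamma> + \<mu> - 1) / \<gamma>)) (at s)"
    and "0 \<le> \<rho>'" "\<rho>' < \<rho>" and v0: "v 0 (state x 0) \<le> z 0"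
  shows "norm (x t) \<le> \<psi> t"
proof (rule le_by_first_crossing[where g = "\<lambda>s. norm (x s)" and \<eta>\<^sub>0 = "\<delta> - M"])
  show "continuous_on {0..t} (\<lambda>s. norm (x s))"
    using assms(1) h_pos by (intro continuous_intros continuous_on_subset[OF x_cont]) auto
  show "continuous_on {0..t} \<psi>" by (rule continuous_on_subset[OF psi_cont]) auto
  show "norm (x 0) \<le> \<psi> 0" using init[of 0] h_pos by simp
next
  fix \<eta> s0
  assume \<eta>: "0 < \<eta>" "\<eta> \<le> \<delta> - M" and s0: "0 < s0" "s0 \<le> t"
    and before: "\<And>u. 0 \<le> u \<Longrightarrow> u < s0 \<Longrightarrow> norm (x u) < \<psi> u + \<eta>"
    and touch: "norm (x s0) = \<psi> s0 + \<eta>"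
  have window: "norm (x u) \<le> \<psi> (max 0 u) + \<eta>" if "-h \<le> u" "u \<le> s0" for u
  proof (cases "u < 0")
    case True
    then show ?thesis using init[of u] that \<eta>(1) by simp
  next
    case False
    then show ?thesis using before[of u] touch that by (cases "u = s0") auto
  qed
  have small: "hnorm h (state x s) \<le> \<delta>" if "0 \<le> s" "s \<le> s0" for s
  proof (rule hnorm_le)
    fix \<theta> assume "\<theta> \<in> {-h..0}"
    then show "norm (state x s \<theta>) \<le> \<delta>"
      using window[of "s + \<theta>"] psi_le[of "max 0 (s + \<theta>)"] that \<eta>(2) by (simp add: state_def)
  qed (use h_pos in simp)
  have "state x s0 \<in> S_alpha h \<alpha>"
  proof (unfold S_alpha_def, intro CollectI ballI)
    fix \<theta> :: real assume "\<theta> \<in> {-h..0}"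
    moreover have "s0 \<le> max 0 (s0 + \<theta>) + h" using \<open>\<theta> \<in> {-h..0}\<close> by auto
    ultimately have "norm (x (s0 + \<theta>)) \<le> \<alpha> * \<psi> s0 + \<eta>"
      using window[of "s0 + \<theta>"] psi_window[of "max 0 (s0 + \<theta>)" s0] s0 by auto
    also have "\<dots> \<le> \<alpha> * norm (x s0)"
      using touch alpha_ge \<eta>(1) by (simp add: algebra_simps)
    finally show "norm (state x s0 \<theta>) \<le> \<alpha> * norm (state x s0 0)" by (simp add: state_def)
  qed
  then have "a1 * norm (x s0) powr \<gamma> \<le> v s0 (state x s0)"
    using v_lower[of s0 "state x s0"] continuous_on_state[OF x_cont] small[of s0] s0 assms(1)
    by (simp add: state_def)
  also have "\<dots> \<le> a1 * \<psi> s0 powr \<gamma>"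
    using v_le_comparison[of s0 z \<rho>'] small z_deriv z_eq assms(1,10,11) v0 s0 psi_nonneg
    by (simp add: a1_pos order.strict_implies_order)
  finally have "norm (x s0) powr \<gamma> \<le> \<psi> s0 powr \<gamma>" using a1_pos by simp
  then show "norm (x s0) \<le> \<psi> s0"
    using powr_less_mono2[OF gamma_pos psi_nonneg[of s0], of "norm (x s0)"] s0 by fastforce
qed (use assms(1,5) in auto)

lemma decay_estimate:
  assumes "hnorm h \<phi> < \<Delta>" "0 < \<rho>'" "\<rho>' < \<rho>"
    and window: "1 + \<rho>' * h * ((\<mu> - 1) / \<gamma>) * K powr ((\<mu> - 1) / \<gamma>) * \<Delta> powr (\<mu> - 1) \<le> \<alpha> powr (\<mu> - 1)"
    and "t \<in> {0..<T}"
  shows "norm (x t) \<le> (K / a1) powr (1 / \<gamma>) * hnorm h \<phi>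
           * (1 + \<rho>' * ((\<mu> - 1) / \<gamma>) * K powr ((\<mu> - 1) / \<gamma>) * hnorm h \<phi> powr (\<mu> - 1) * t) powr (- 1 / (\<mu> - 1))"
proof -
  define r where "r = hnorm h \<phi>"
  define k where "k = (\<mu> - 1) / \<gamma>"
  define c1 where "c1 = (K / a1) powr (1 / \<gamma>)"
  define a where "a = \<rho>' * k * K powr k * r powr (\<mu> - 1)"
  have r: "0 \<le> r" "r < \<Delta>" using hnorm_nonneg[OF _ phi_cont] h_pos assms(1) by (auto simp: r_def)
  have k: "0 < k" "\<gamma> * k = \<mu> - 1" "1 + k = (\<gamma> + \<mu> - 1) / \<gamma>"
    using gamma_pos mu_gt by (simp_all add: k_def field_simps)
  have K: "0 < K" using a1_le_K a1_pos by simp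
  have a: "0 \<le> a" using assms(2) k K r by (simp add: a_def)
  have c1: "1 \<le> c1" using a1_le_K a1_pos gamma_pos by (simp add: c1_def ge_one_powr_ge_zero)
  have "c1 * \<Delta> = (K / a1) powr (1 / \<gamma>) * (\<Delta> powr \<gamma>) powr (1 / \<gamma>)"
    using Delta_pos gamma_pos by (simp add: c1_def powr_powr)
  also have "\<dots> = (K / a1 * \<Delta> powr \<gamma>) powr (1 / \<gamma>)"
    using K a1_pos powr_mult[of "K / a1" "\<Delta> powr \<gamma>" "1 / \<gamma>"] by simp
  also have "\<dots> = \<delta>"
    using K_Delta a1_pos delta_pos gamma_pos by (simp add: powr_powr)
  finally have c1r: "c1 * r < \<delta>" using r c1 mult_strict_left_mono[of r \<Delta> c1] by simp
  define \<psi> where "\<psi> = decay_bound (c1 * r) a (1 / (\<mu> - 1))"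
  define z where "z = decay_bound (K * r powr \<gamma>) a (1 / k)"
  have a_alt: "a = \<rho>' * k * (K * r powr \<gamma>) powr k"
    using K r k by (simp add: a_def powr_mult powr_powr)
  have z_eq: "z s = a1 * \<psi> s powr \<gamma>" if "0 \<le> s" for s
  proof -
    have "\<psi> s powr \<gamma> = decay_bound ((K / a1) * r powr \<gamma>) a (1 / k) s"
      unfolding \<psi>_def using decay_bound_powr[of "c1 * r" a s "1 / (\<mu> - 1)" \<gamma>] c1 r K a1_pos a that k gamma_pos
      by (simp add: c1_def powr_mult powr_powr add_pos_nonneg k_def)
    then show ?thesis using a1_pos by (simp add: z_def decay_bound_def)
  qed
  have z_deriv: "(z has_real_derivative - \<rho>' * z s powr ((\<gamma> + \<mu> - 1) / \<gamma>)) (at s)" if "0 \<le> s" for s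
    using decay_bound_has_real_derivative[of k "K * r powr \<gamma>" \<rho>' s] k K r a that
    unfolding z_def a_alt by (simp add: add_pos_nonneg)
  have "(1 + a * h) powr (1 / (\<mu> - 1)) \<le> (\<alpha> powr (\<mu> - 1)) powr (1 / (\<mu> - 1))"
  proof (rule powr_mono2)
    have "r powr (\<mu> - 1) \<le> \<Delta> powr (\<mu> - 1)" using r mu_gt by (intro powr_mono2) auto
    then have "\<rho>' * h * k * K powr k * r powr (\<mu> - 1) \<le> \<rho>' * h * k * K powr k * \<Delta> powr (\<mu> - 1)"
      using assms(2) k h_pos by (intro mult_left_mono) auto
    then have "a * h \<le> \<rho>' * h * k * K powr k * \<Delta> powr (\<mu> - 1)"
      by (simp add: a_def algebra_simps)
    then show "1 + a * h \<le> \<alpha> powr (\<mu> - 1)" using window by (simp add: k_def)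
  qed (use mu_gt a h_pos in auto)
  then have psi_window: "(1 + a * h) powr (1 / (\<mu> - 1)) \<le> \<alpha>"
    using mu_gt alpha_ge by (simp add: powr_powr)
  have "norm (x t) \<le> \<psi> t"
  proof (rule norm_le_barrier[of t \<psi> "c1 * r" z \<rho>'])
    show "continuous_on {0..} \<psi>" unfolding \<psi>_def using a by (rule continuous_on_decay_bound)
    show "\<psi> s \<le> c1 * r" if "0 \<le> s" for s
      unfolding \<psi>_def using c1 r a mu_gt that by (intro decay_bound_le) auto
    show "\<psi> s \<le> \<alpha> * \<psi> s'" if "0 \<le> s" "s \<le> s'" "s' \<le> s + h" for s s'
      unfolding \<psi>_def using decay_bound_window[OF _ a _ psi_window that] c1 r mu_gt by simp
    show "norm (x \<theta>) \<le> \<psi> 0" if "\<theta> \<in> {-h..0}" for \<theta>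
      using norm_le_hnorm[OF phi_cont that] x_init[OF that] c1 r mult_right_mono[of 1 c1 r]
      by (simp add: \<psi>_def r_def)
    show "v 0 (state x 0) \<le> z 0"
    proof -
      have "hnorm h (state x 0) = r"
        unfolding hnorm_def state_def r_def by (rule SUP_cong) (simp_all add: x_init)
      moreover have "continuous_on {-h..0} (state x 0)"
        using continuous_on_state[OF x_cont] assms(5) by simp
      ultimately show ?thesis
        using v_upper[of 0 "state x 0"] r by (simp add: z_def)
    qed
    show "0 \<le> \<psi> s" for s unfolding \<psi>_def using c1 r by (simp add: decay_bound_nonneg)
    show "0 \<le> \<rho>'" using assms(2) by simp
  qed (fact assms(3,5) c1r z_eq z_deriv)+
  then show ?thesis
    unfolding \<psi>_def decay_bound_def a_def r_def c1_def k_def by (simp only: minus_divide_left)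
qed

end

theorem theorem3:
  fixes f :: "'a::euclidean_space \<Rightarrow> 'a \<Rightarrow> 'a"
    and f1 f2 :: "'a \<Rightarrow> 'a \<Rightarrow> 'a \<Rightarrow>\<^sub>L 'a"
    and B :: "real \<Rightarrow> 'a \<Rightarrow>\<^sub>L 'a"
    and Q :: "'a \<Rightarrow> 'a \<Rightarrow> 'a"
    and Q1 Q2 :: "'a \<Rightarrow> 'a \<Rightarrow> 'a \<Rightarrow>\<^sub>L 'a"
    and V :: "'a \<Rightarrow> real" and DV :: "'a \<Rightarrow> 'a" and D2V :: "'a \<Rightarrow> 'a \<Rightarrow>\<^sub>L 'a"
    and h \<mu> \<sigma> \<gamma> m1 m2 \<eta>11 \<eta>12 bhat p1 p2 q11 q12 q21 q22 w \<alpha>0 \<alpha>1 \<beta> \<psi> w1 w2 \<epsilon> l0 kap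
        \<alpha> \<delta> c0 c1 c2 a1 b0 b1 \<Delta> \<rho>t b2 b3 b c K \<rho> m p c1hat c2hat :: real
  assumes h_pos: "h > 0"
    (* (i) *)
    and f_loclip: "\<forall>r>0. \<exists>L. \<forall>a b a' b'. norm (a, b) \<le> r \<and> norm (a', b') \<le> r \<longrightarrow>
                      norm (f a b - f a' b') \<le> L * norm ((a, b) - (a', b'))"
    and f1_deriv: "\<And>a b. ((\<lambda>y. f y b) has_derivative blinfun_apply (f1 a b)) (at a)"
    and f2_deriv: "\<And>a b. ((\<lambda>y. f a y) has_derivative blinfun_apply (f2 a b)) (at b)"
    and f1_cont: "continuous_on UNIV (\<lambda>z. f1 (fst z) (snd z))"
    and f2_cont: "continuous_on UNIV (\<lambda>z. f2 (fst z) (snd z))"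
    and mu_gt: "\<mu> > 1"
    and f_hom: "\<And>c a b. c > 0 \<Longrightarrow> f (c *\<^sub>R a) (c *\<^sub>R b) = c powr \<mu> *\<^sub>R f a b"
    and m_nonneg: "m1 \<ge> 0" "m2 \<ge> 0" "\<eta>11 \<ge> 0" "\<eta>12 \<ge> 0"
    and f_bound: "\<And>a b. norm (f a b) \<le> m1 * norm a powr \<mu> + m2 * norm b powr \<mu>"
    and f1_bound: "\<And>a b. norm (f1 a b) \<le> \<eta>11 * norm a powr (\<mu> - 1) + \<eta>12 * norm b powr (\<mu> - 1)"
    (* (ii) *)
    and B_cont: "continuous_on {0..} B"
    and B_bound: "\<And>t. t \<ge> 0 \<Longrightarrow> norm (B t) \<le> bhat"
    (* (iii) *)
    and Q1_deriv: "\<And>a b. ((\<lambda>y. Q y b) has_derivative blinfun_apply (Q1 a b)) (at a)"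
    and Q2_deriv: "\<And>a b. ((\<lambda>y. Q a y) has_derivative blinfun_apply (Q2 a b)) (at b)"
    and Q1_cont: "continuous_on UNIV (\<lambda>z. Q1 (fst z) (snd z))"
    and Q2_cont: "continuous_on UNIV (\<lambda>z. Q2 (fst z) (snd z))"
    and sigma_gt: "\<sigma> > 1"
    and p_nonneg: "p1 \<ge> 0" "p2 \<ge> 0" "q11 \<ge> 0" "q12 \<ge> 0" "q21 \<ge> 0" "q22 \<ge> 0"
    and Q_bound: "\<And>a b. norm (Q a b) \<le> p1 * norm a powr \<sigma> + p2 * norm b powr \<sigma>"
    and Q1_bound: "\<And>a b. norm (Q1 a b) \<le> q11 * norm a powr (\<sigma> - 1) + q12 * norm b powr (\<sigma> - 1)"
    and Q2_bound: "\<And>a b. norm (Q2 a b) \<le> q21 * norm a powr (\<sigma> - 1) + q22 * norm b powr (\<sigma> - 1)"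
    (* (iv) *)
    and stable: "asymp_stable (\<lambda>y. f y y)"
    and gamma_ge: "\<gamma> \<ge> 2"
    and V_deriv: "\<And>z. (V has_derivative (\<lambda>k. DV z \<bullet> k)) (at z)"
    and DV_deriv: "\<And>z. (DV has_derivative blinfun_apply (D2V z)) (at z)"
    and D2V_cont: "continuous_on UNIV D2V"
    and V_posdef: "V 0 = 0" "\<And>z. z \<noteq> 0 \<Longrightarrow> V z > 0"
    and V_hom: "\<And>c z. c > 0 \<Longrightarrow> V (c *\<^sub>R z) = c powr \<gamma> * V z"
    and consts_pos: "w > 0" "\<alpha>0 > 0" "\<alpha>1 > 0" "\<beta> > 0" "\<psi> > 0"
    and V_lyap: "\<And>z. DV z \<bullet> f z z \<le> - w * norm z powr (\<gamma> + \<mu> - 1)"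
    and V_bounds: "\<And>z. \<alpha>0 * norm z powr \<gamma> \<le> V z" "\<And>z. V z \<le> \<alpha>1 * norm z powr \<gamma>"
    and DV_bound: "\<And>z. norm (DV z) \<le> \<beta> * norm z powr (\<gamma> - 1)"
    and D2V_bound: "\<And>z. z \<noteq> 0 \<Longrightarrow> norm (D2V z) \<le> \<psi> * norm z powr (\<gamma> - 2)"
    (* perturbation classes (a) / (b) and the constant standing for omega(eps)/eps *)
    and cases_ab:
      "((\<exists>M. \<forall>t\<ge>0. norm (integral {0..t} B) \<le> M) \<and> \<sigma> > (\<mu> + 1) / 2 \<and>
          \<epsilon> = 0 \<and> l0 > 0 \<and> (\<forall>t\<ge>0. norm (Lfun B h t 0) \<le> l0) \<and> kap = l0)
       \<or> ((\<forall>e>0. \<exists>T0. \<forall>T\<ge>T0. \<forall>t\<ge>0. norm ((1 / T) *\<^sub>R integral {t..t+T} B) < e) \<and> \<sigma> \<ge> \<mu> \<and>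
          \<epsilon> > 0 \<and> kap = omega B h \<epsilon> / \<epsilon>)"
    and w12: "w1 > 0" "w2 > 0" "w - w1 - h * w2 > 0"
    (* constants of the theorem *)
    and alpha_gt: "\<alpha> > 1"
    and consts2: "\<delta> > 0" "c0 > 0" "c1 > 0" "c2 > 0" "a1 > 0" "b0 > 0" "b1 > 0"
    and L1: "\<forall>\<phi> T x. continuous_on {-h..0} \<phi> \<and> T > 0 \<and> is_solution f B Q h \<phi> T x \<longrightarrow>
               (\<forall>t\<in>{0..<T}. hnorm h (state x t) \<le> \<delta> \<longrightarrow>
                  (\<exists>D. ((\<lambda>s. vfun V DV f B Q h \<epsilon> w1 w2 \<gamma> \<mu> s (state x s)) has_real_derivative D)
                          (at t within {0..<T}) \<and>
                       D \<le> - c0 * norm (x t) powr (\<gamma> + \<mu> - 1) - c1 * norm (x (t - h)) powr (\<gamma> + \<mu> - 1)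
                            - c2 * integral {-h..0} (\<lambda>\<theta>. norm (x (t + \<theta>)) powr (\<gamma> + \<mu> - 1))))"
    and L2: "\<forall>t\<ge>0. \<forall>\<phi>. continuous_on {-h..0} \<phi> \<and> \<phi> \<in> S_alpha h \<alpha> \<and> hnorm h \<phi> \<le> \<delta> \<longrightarrow>
               vfun V DV f B Q h \<epsilon> w1 w2 \<gamma> \<mu> t \<phi>
                 \<ge> a1 * norm (\<phi> 0) powr \<gamma> + w1 * integral {-h..0} (\<lambda>\<theta>. norm (\<phi> \<theta>) powr (\<gamma> + \<mu> - 1))"
    and L3: "\<forall>t\<ge>0. \<forall>\<phi>. continuous_on {-h..0} \<phi> \<and> hnorm h \<phi> \<le> \<delta> \<longrightarrow>
               vfun V DV f B Q h \<epsilon> w1 w2 \<gamma> \<mu> t \<phi>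
                 \<le> b0 * norm (\<phi> 0) powr \<gamma> + b1 * integral {-h..0} (\<lambda>\<theta>. norm (\<phi> \<theta>) powr \<gamma>)"
    and m_def: "m = m1 + m2" and p_def: "p = p1 + p2"
    and b2_def: "b2 = (\<beta> * m + w1 + h * w2) * h"
    and b3_def: "b3 = \<beta> * p * (bhat * h + kap)"
    and Delta_pos: "\<Delta> > 0"
    and Delta_root: "\<alpha>1 * \<Delta> powr \<gamma> + b2 * \<Delta> powr (\<gamma> + \<mu> - 1) + b3 * \<Delta> powr (\<gamma> + \<sigma> - 1) = a1 * \<delta> powr \<gamma>"
    and b_def: "b = max b0 b1" and c_def: "c = min c0 c2"
    and K_def: "K = \<alpha>1 + b2 * \<Delta> powr (\<mu> - 1) + b3 * \<Delta> powr (\<sigma> - 1)"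
    and rho_def: "\<rho> = c / (b powr ((\<gamma> + \<mu> - 1) / \<gamma>) * (2 * max 1 h) powr ((\<mu> - 1) / \<gamma>))"
    and rhot: "0 < \<rho>t" "\<rho>t < \<rho>"
    and rhot_ineq: "1 + \<rho>t * h * ((\<mu> - 1) / \<gamma>) * K powr ((\<mu> - 1) / \<gamma>) * \<Delta> powr (\<mu> - 1) \<le> \<alpha> powr (\<mu> - 1)"
    and c1hat_def: "c1hat = (K / a1) powr (1 / \<gamma>)"
    and c2hat_def: "c2hat = \<rho>t * ((\<mu> - 1) / \<gamma>) * K powr ((\<mu> - 1) / \<gamma>)"
  shows "\<forall>\<phi> T x. continuous_on {-h..0} \<phi> \<and> hnorm h \<phi> < \<Delta> \<and> T > 0 \<and> is_solution f B Q h \<phi> T x \<longrightarrow>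
           (\<forall>t\<in>{0..<T}. norm (x t)
               \<le> c1hat * hnorm h \<phi> * (1 + c2hat * hnorm h \<phi> powr (\<mu> - 1) * t) powr (- 1 / (\<mu> - 1)))"
proof -
  have L_bound: "norm (Lfun B h t \<epsilon>) \<le> kap" if "0 \<le> t" for t
    using cases_ab norm_Lfun_le_omega[of \<epsilon> h t B bhat] B_cont B_bound h_pos that by auto
  have v_upper: "vfun V DV f B Q h \<epsilon> w1 w2 \<gamma> \<mu> t \<psi> \<le> K * hnorm h \<psi> powr \<gamma>"
    if "0 \<le> t" "continuous_on {-h..0} \<psi>" "hnorm h \<psi> \<le> \<Delta>" for t and \<psi> :: "real \<Rightarrow> 'a"
    unfolding K_def b2_def b3_def m_def p_def
    by (rule vfun_le_hnorm_powr[OF h_pos that])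
       (use gamma_ge mu_gt sigma_gt m_nonneg p_nonneg consts_pos w12 V_bounds(2) DV_bound f_bound Q_bound
            B_bound L_bound[OF that(1)] in auto)
  have K_Delta: "K * \<Delta> powr \<gamma> = a1 * \<delta> powr \<gamma>"
    using Delta_root Delta_pos by (simp add: K_def algebra_simps powr_add[symmetric])
  show ?thesis
  proof (intro allI impI ballI)
    fix \<phi> T x t
    assume "continuous_on {-h..0} \<phi> \<and> hnorm h \<phi> < \<Delta> \<and> T > 0 \<and> is_solution f B Q h \<phi> T x" and "t \<in> {0..<T}"
    then have \<phi>: "continuous_on {-h..0} \<phi>" "hnorm h \<phi> < \<Delta>" and "0 < T" and sol: "is_solution f B Q h \<phi> T x"
      and t: "t \<in> {0..<T}" by auto
    let ?v = "vfun V DV f B Q h \<epsilon> w1 w2 \<gamma> \<mu>"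
    interpret delay_lyapunov_trajectory h \<gamma> \<mu> \<delta> \<Delta> \<alpha> a1 K \<rho> ?v \<phi> x T
    proof
      show "\<exists>D. ((\<lambda>s. ?v s (state x s)) has_real_derivative D) (at s within {0..<T}) \<and>
              (0 < ?v s (state x s) \<longrightarrow>
                 D \<le> - \<rho> * ?v s (state x s) powr ((\<gamma> + \<mu> - 1) / \<gamma>))"
        if s: "s \<in> {0..<T}" "hnorm h (state x s) \<le> \<delta>" for s
      proof -
        have cont: "continuous_on {-h..0} (state x s)"
          using sol s(1) by (intro continuous_on_state) (auto simp: is_solution_def)
        have deriv: "\<exists>D. ((\<lambda>s. ?v s (state x s)) has_real_derivative D) (at s within {0..<T}) \<and>
                D \<le> - c0 * norm (x s) powr (\<gamma> + \<mu> - 1) - c1 * norm (x (s - h)) powr (\<gamma> + \<mu> - 1)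
                     - c2 * integral {-h..0} (\<lambda>\<theta>. norm (x (s + \<theta>)) powr (\<gamma> + \<mu> - 1))"
          using L1 \<phi>(1) \<open>0 < T\<close> sol s by blast
        have "?v s (state x s) \<le> b0 * norm (state x s 0) powr \<gamma>
                + b1 * integral {-h..0} (\<lambda>\<theta>. norm (state x s \<theta>) powr \<gamma>)"
          using L3 cont s by auto
        from lyapunov_rate_along_trajectory[where v = ?v, OF h_pos _ mu_gt _ _ _ _ _ cont deriv this] consts2 gamma_ge
        show ?thesis unfolding rho_def b_def c_def by simp
      qed
      show "a1 * norm (\<psi> 0) powr \<gamma> \<le> ?v t \<psi>"
        if "0 \<le> t" "continuous_on {-h..0} \<psi>" "\<psi> \<in> S_alpha h \<alpha>" "hnorm h \<psi> \<le> \<delta>" for t \<psi>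
      proof -
        have "0 \<le> w1 * integral {-h..0} (\<lambda>\<theta>. norm (\<psi> \<theta>) powr (\<gamma> + \<mu> - 1))"
          using w12(1) by (simp add: integral_interval_nonneg)
        then show ?thesis using L2 that by fastforce
      qed
    qed (use h_pos gamma_ge mu_gt alpha_gt consts2 Delta_pos K_Delta \<phi>(1) sol v_upper in
         \<open>auto simp: is_solution_def\<close>)
    show "norm (x t) \<le> c1hat * hnorm h \<phi> * (1 + c2hat * hnorm h \<phi> powr (\<mu> - 1) * t) powr (- 1 / (\<mu> - 1))"
      using decay_estimate[OF \<phi>(2) rhot rhot_ineq t] by (simp add: c1hat_def c2hat_def)
  qed
qed

end
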